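(* Let $\widehat{\mathscr{O}}$ be a commutative local principal ideal ring, complete with respect to its unique maximal ideal $\mathfrak{m}$, with residue field $k$ of characteristic not equal to $2$. Let $A\in\mathrm{M}_n(\widehat{\mathscr{O}})$ be cyclic, and let $F\in\widehat{\mathscr{O}}[t]$ be a monic polynomial of degree $d$, with reduction $\overline{F}\in k[t]$ and formal derivative $F'$. Suppose there is $\widetilde{B}\in\mathrm{M}_n(k)$ such that $\overline{F}(\widetilde{B})=\overline{A}$ and $\overline{F}'(\widetilde{B})\in\mathrm{GL}_n(k)$. Then there exists $B\in\mathrm{M}_n(\widehat{\mathscr{O}})$ such that $\overline{B}=\widetilde{B}$ and $F(B)=A$.
   Context: Bars denote reduction modulo $\mathfrak m$ (entrywise for matrices, coefficientwise for polynomials). $A\in\mathrm{M}_n(\widehat{\mathscr O})$ is called cyclic if $\overline{A}\in\mathrm{M}_n(k)$ is cyclic, i.e. $k^n$ is a cyclic $k[t]$-module via $\overline A$. Completeness means $\widehat{\mathscr O}\to\varprojlim_j\widehat{\mathscr O}/\mathfrak m^j$ is an isomorphism. *)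

theory Defs
  imports "HOL-Analysis.Analysis" "HOL-Computational_Algebra.Polynomial"
begin

definition is_ideal :: "'a::comm_ring_1 set \<Rightarrow> bool" where
  "is_ideal I \<longleftrightarrow> 0 \<in> I \<and> (\<forall>x\<in>I. \<forall>y\<in>I. x + y \<in> I) \<and> (\<forall>r. \<forall>x\<in>I. r * x \<in> I)"

definition maximal_ideal :: "'a::comm_ring_1 set \<Rightarrow> bool" where
  "maximal_ideal I \<longleftrightarrow> is_ideal I \<and> I \<noteq> UNIV \<and>
     (\<forall>J. is_ideal J \<and> I \<subseteq> J \<and> J \<noteq> UNIV \<longrightarrow> J = I)"

definition local_ring_with :: "'a::comm_ring_1 set \<Rightarrow> bool" where
  "local_ring_with m \<longleftrightarrow> (\<forall>I. maximal_ideal I \<longleftrightarrow> I = m)"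

definition principal_ideal_ring :: "'a::comm_ring_1 itself \<Rightarrow> bool" where
  "principal_ideal_ring _ \<longleftrightarrow> (\<forall>I::'a set. is_ideal I \<longrightarrow> (\<exists>g. I = {r * g | r. True}))"

fun ideal_pow :: "'a::comm_ring_1 set \<Rightarrow> nat \<Rightarrow> 'a set" where
  "ideal_pow I 0 = UNIV"
| "ideal_pow I (Suc j) = {x. \<exists>(S::nat set) f g. finite S \<and> (\<forall>i\<in>S. f i \<in> I \<and> g i \<in> ideal_pow I j)
                                  \<and> x = (\<Sum>i\<in>S. f i * g i)}"

(* completeness: R \<rightarrow> lim_j R/m^j is bijective (injective and surjective),
   elements of the inverse limit being represented by compatible sequences *)
definition complete_wrt :: "'a::comm_ring_1 set \<Rightarrow> bool" where
  "complete_wrt m \<longleftrightarrow>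
     (\<forall>x. (\<forall>j. x \<in> ideal_pow m j) \<longrightarrow> x = 0) \<and>
     (\<forall>s::nat \<Rightarrow> 'a. (\<forall>j. s (Suc j) - s j \<in> ideal_pow m j) \<longrightarrow>
        (\<exists>y. \<forall>j. y - s j \<in> ideal_pow m j))"

definition mat_pow :: "'a::semiring_1^'n^'n \<Rightarrow> nat \<Rightarrow> 'a^'n^'n" where
  "mat_pow B i = (((**) B) ^^ i) (mat 1)"

definition poly_mat :: "'a::comm_ring_1 poly \<Rightarrow> 'a^'n^'n \<Rightarrow> 'a^'n^'n" where
  "poly_mat p B = (\<Sum>i\<le>degree p. mat (coeff p i) ** mat_pow B i)"

definition map_mat :: "('a \<Rightarrow> 'b) \<Rightarrow> 'a^'n^'m \<Rightarrow> 'b^'n^'m" where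
  "map_mat f A = (\<chi> i j. f (A $ i $ j))"

definition cyclic_mat :: "'k::field^'n^'n \<Rightarrow> bool" where
  "cyclic_mat M \<longleftrightarrow> (\<exists>v::'k^'n. \<forall>w. \<exists>p. w = poly_mat p M *v v)"

end

theory Submission
  imports Defs
begin

(* Newton's method, run inside the commutative algebra of polynomials in A, where the Taylor
   expansion F(g + h) = F(g) + F'(g) h + h^2 Q holds.  Since the reduction of A is cyclic,
   Bt and the inverse of F'(Bt), which both commute with it, are polynomials in it; lift them
   to polynomials q and c over the ring.  The iteration g |-> g - c (F(g) - t) starting at q
   keeps the reduction of g(A) equal to Bt and pushes the defect F(g(A)) - A one power of m
   deeper at each step, so the matrices g(A) converge m-adically to the required root B. *)

lemma mat_pow_0 [simp]: "mat_pow B 0 = mat 1"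
  by (simp add: mat_pow_def)

lemma mat_pow_Suc: "mat_pow B (Suc i) = B ** mat_pow B i"
  by (simp add: mat_pow_def)

lemma matrix_mul_sum_right: "(M::'a::semiring_1^'n^'m) ** sum f S = (\<Sum>i\<in>S. M ** f i)"
  by (induction S rule: infinite_finite_induct) (auto simp: matrix_add_ldistrib)

lemma matrix_add_rdistrib: "((A::'a::semiring_1^'n^'m) + B) ** C = A ** C + B ** C"
  by (simp add: matrix_matrix_mult_def vec_eq_iff distrib_right sum.distrib)

lemma matrix_diff_ldistrib: "(A::'a::ring_1^'n^'m) ** (B - C) = A ** B - A ** C"
  by (simp add: matrix_matrix_mult_def vec_eq_iff right_diff_distrib sum_subtractf)

lemma matrix_diff_rdistrib: "((A::'a::ring_1^'n^'m) - B) ** C = A ** C - B ** C"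
  by (simp add: matrix_matrix_mult_def vec_eq_iff left_diff_distrib sum_subtractf)

lemma mat_matrix_mul_component: "(mat (c::'a::semiring_1) ** X) $ i $ j = c * X $ i $ j"
  unfolding matrix_matrix_mult_def mat_def
  by (auto simp: if_distrib if_distribR sum.delta[OF finite] cong: if_cong)

lemma matrix_mul_mat_component: "(X ** mat (c::'a::semiring_1)) $ i $ j = X $ i $ j * c"
  unfolding matrix_matrix_mult_def mat_def
  by (auto simp: if_distrib if_distribR sum.delta'[OF finite] cong: if_cong)

lemma mat_mult_commute: "mat (c::'a::comm_semiring_1) ** (X::'a^'n^'n) = X ** mat c"
  by (simp add: vec_eq_iff mat_matrix_mul_component matrix_mul_mat_component mult.commute)

lemma mat_mult_mat: "mat (a::'a::semiring_1) ** (mat b :: 'a^'n^'n) = mat (a * b)"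
  by (simp add: vec_eq_iff mat_matrix_mul_component) (simp add: mat_def)

lemma mat_add_mat: "mat (a::'a::monoid_add) + (mat b :: 'a^'n^'n) = mat (a + b)"
  by (simp add: mat_def vec_eq_iff)

lemma mat_mult_left_commute: "mat c ** ((M::'a::comm_semiring_1^'n^'n) ** X) = M ** (mat c ** X)"
proof -
  have "mat c ** (M ** X) = (mat c ** M) ** X"
    by (rule matrix_mul_assoc)
  also have "\<dots> = (M ** mat c) ** X"
    by (simp only: mat_mult_commute)
  also have "\<dots> = M ** (mat c ** X)"
    by (rule matrix_mul_assoc[symmetric])
  finally show ?thesis .
qed

lemma matrix_inverse_commute:
  fixes N D M :: "'a::semiring_1^'n^'n"
  assumes "N ** D = mat 1" and "D ** N = mat 1" and "N ** M = M ** N"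
  shows "D ** M = M ** D"
proof -
  have "D ** M = D ** (M ** (N ** D))"
    by (simp add: assms(1))
  also have "\<dots> = D ** ((N ** M) ** D)"
    by (simp only: matrix_mul_assoc assms(3))
  also have "\<dots> = M ** D"
    by (simp only: matrix_mul_assoc assms(2) matrix_mul_lid)
  finally show ?thesis .
qed

lemma poly_mat_eq_sum:
  assumes "degree p \<le> N"
  shows "poly_mat p M = (\<Sum>i\<le>N. mat (coeff p i) ** mat_pow M i)"
  unfolding poly_mat_def using assms
  by (intro sum.mono_neutral_left) (auto simp: coeff_eq_0)

lemma poly_mat_pCons: "poly_mat (pCons a p) M = mat a + M ** poly_mat p M"
proof -
  have "poly_mat (pCons a p) M = (\<Sum>i\<le>Suc (degree p). mat (coeff (pCons a p) i) ** mat_pow M i)"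
    by (rule poly_mat_eq_sum) (rule degree_pCons_le)
  also have "\<dots> = mat a + (\<Sum>i\<le>degree p. mat (coeff p i) ** (M ** mat_pow M i))"
    by (subst sum.atMost_Suc_shift) (simp add: mat_pow_Suc)
  also have "\<dots> = mat a + M ** poly_mat p M"
    by (simp add: poly_mat_def matrix_mul_sum_right mat_mult_left_commute)
  finally show ?thesis .
qed

lemma poly_mat_0 [simp]: "poly_mat 0 M = 0"
  by (simp add: poly_mat_def)

lemma poly_mat_1: "poly_mat 1 M = mat 1"
  by (simp add: one_pCons poly_mat_pCons)

lemma poly_mat_X: "poly_mat [:0, 1:] M = M"
  by (simp add: poly_mat_pCons)

lemma poly_mat_add: "poly_mat (p + q) M = poly_mat p M + poly_mat q M"
proof (induction p arbitrary: q)
  case (pCons a p)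
  then show ?case
    by (cases q rule: pCons_cases)
      (simp add: poly_mat_pCons matrix_add_ldistrib mat_add_mat[symmetric] add_ac)
qed simp

lemma poly_mat_diff: "poly_mat (p - q) M = poly_mat p M - poly_mat q M"
  using poly_mat_add[of "p - q" q M] by (simp add: eq_diff_eq)

lemma poly_mat_smult: "poly_mat (smult a p) M = mat a ** poly_mat p M"
  by (induction p)
    (simp_all add: poly_mat_pCons matrix_add_ldistrib mat_mult_mat mat_mult_left_commute)

lemma poly_mat_mult: "poly_mat (p * q) M = poly_mat p M ** poly_mat q M"
  by (induction p)
    (simp_all add: poly_mat_add poly_mat_smult poly_mat_pCons
      matrix_add_rdistrib matrix_mul_assoc)

lemma poly_mat_pcompose: "poly_mat (pcompose p q) M = poly_mat p (poly_mat q M)"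
  by (induction p) (simp_all add: pcompose_pCons poly_mat_add poly_mat_mult poly_mat_pCons)

lemma poly_mat_commute: "poly_mat p M ** poly_mat q M = poly_mat q M ** poly_mat p M"
  by (simp only: poly_mat_mult[symmetric] mult.commute)

lemma commute_poly_mat:
  assumes "Y ** M = M ** Y"
  shows "Y ** poly_mat p M = poly_mat p M ** Y"
proof (induction p)
  case (pCons a p)
  have "Y ** (M ** poly_mat p M) = M ** poly_mat p M ** Y"
    by (simp add: matrix_mul_assoc assms) (simp add: pCons.IH matrix_mul_assoc[symmetric])
  moreover have "Y ** mat a = mat a ** Y"
    by (rule mat_mult_commute[symmetric])
  ultimately show ?case
    by (simp add: poly_mat_pCons matrix_add_ldistrib matrix_add_rdistrib)
qed simp

lemma cyclic_mat_centralizer: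
  assumes "cyclic_mat M" and "Y ** M = M ** Y"
  obtains p where "Y = poly_mat p M"
proof -
  obtain v where v: "\<And>w. \<exists>p. w = poly_mat p M *v v"
    using assms(1) unfolding cyclic_mat_def by blast
  then obtain p where p: "Y *v v = poly_mat p M *v v"
    by blast
  have "Y *v w = poly_mat p M *v w" for w
  proof -
    obtain r where r: "w = poly_mat r M *v v"
      using v by blast
    have "Y *v w = poly_mat r M *v (Y *v v)"
      by (simp add: r matrix_vector_mul_assoc commute_poly_mat[OF assms(2)])
    also have "\<dots> = poly_mat p M *v w"
      by (simp add: r p matrix_vector_mul_assoc poly_mat_commute)
    finally show ?thesis .
  qed
  then have "Y = poly_mat p M"
    by (simp add: matrix_eq)
  then show ?thesis
    by (rule that)
qed

lemma ideal_pow_SucI: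
  assumes "finite (S::nat set)" and "\<And>i. i \<in> S \<Longrightarrow> f i \<in> I"
    and "\<And>i. i \<in> S \<Longrightarrow> g i \<in> ideal_pow I j"
  shows "(\<Sum>i\<in>S. f i * g i) \<in> ideal_pow I (Suc j)"
  unfolding ideal_pow.simps mem_Collect_eq using assms by blast

lemma zero_in_ideal_pow: "0 \<in> ideal_pow I j"
  by (cases j) (auto intro!: exI[of _ "{}"])

lemma ideal_pow_mult_left:
  assumes "x \<in> ideal_pow I j"
  shows "r * x \<in> ideal_pow I j"
  using assms
proof (induction j arbitrary: x)
  case (Suc j)
  from Suc.prems obtain S :: "nat set" and f g where S: "finite S" "\<forall>i\<in>S. f i \<in> I \<and> g i \<in> ideal_pow I j"
    and x: "x = (\<Sum>i\<in>S. f i * g i)"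
    by auto
  have "r * x = (\<Sum>i\<in>S. f i * (r * g i))"
    by (simp add: x sum_distrib_left mult.left_commute)
  also have "\<dots> \<in> ideal_pow I (Suc j)"
    using S by (intro ideal_pow_SucI) (simp_all add: Suc.IH)
  finally show ?case .
qed simp

lemma ideal_pow_mult:
  assumes "x \<in> ideal_pow I a" and "y \<in> ideal_pow I b"
  shows "x * y \<in> ideal_pow I (a + b)"
  using assms
proof (induction a arbitrary: x)
  case 0
  then show ?case
    by (metis ideal_pow_mult_left add_0)
next
  case (Suc a)
  from Suc.prems(1) obtain S :: "nat set" and f g where S: "finite S" "\<forall>i\<in>S. f i \<in> I \<and> g i \<in> ideal_pow I a"
    and x: "x = (\<Sum>i\<in>S. f i * g i)"
    by auto
  have "x * y = (\<Sum>i\<in>S. f i * (g i * y))"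
    by (simp add: x sum_distrib_right mult.assoc)
  also have "\<dots> \<in> ideal_pow I (Suc a + b)"
    using S Suc.prems(2) by (simp only: add_Suc) (intro ideal_pow_SucI; simp add: Suc.IH)
  finally show ?case .
qed

lemma ideal_pow_add:
  assumes "x \<in> ideal_pow I j" and "y \<in> ideal_pow I j"
  shows "x + y \<in> ideal_pow I j"
proof (cases j)
  case (Suc j')
  obtain S :: "nat set" and f g where S: "finite S" "\<forall>i\<in>S. f i \<in> I \<and> g i \<in> ideal_pow I j'"
    and x: "x = (\<Sum>i\<in>S. f i * g i)"
    using assms(1) Suc by auto
  obtain T :: "nat set" and f' g' where T: "finite T" "\<forall>i\<in>T. f' i \<in> I \<and> g' i \<in> ideal_pow I j'"
    and y: "y = (\<Sum>i\<in>T. f' i * g' i)"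
    using assms(2) Suc by auto
  define U where "U = (\<lambda>i. 2 * i) ` S \<union> (\<lambda>i. 2 * i + 1) ` T"
  define f'' where "f'' i = (if even i then f (i div 2) else f' (i div 2))" for i :: nat
  define g'' where "g'' i = (if even i then g (i div 2) else g' (i div 2))" for i :: nat
  have disjoint: "(\<lambda>i. 2 * i) ` S \<inter> (\<lambda>i::nat. 2 * i + 1) ` T = {}"
    by auto presburger
  have "x + y = (\<Sum>i\<in>(\<lambda>i. 2 * i) ` S. f'' i * g'' i) + (\<Sum>i\<in>(\<lambda>i. 2 * i + 1) ` T. f'' i * g'' i)"
    by (simp add: sum.reindex inj_on_def x y f''_def g''_def)
  also have "\<dots> = (\<Sum>i\<in>U. f'' i * g'' i)"
    unfolding U_def using S(1) T(1) disjoint by (simp add: sum.union_disjoint)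
  also have "\<dots> \<in> ideal_pow I (Suc j')"
    using S T by (intro ideal_pow_SucI) (auto simp: U_def f''_def g''_def)
  finally show ?thesis
    using Suc by simp
qed simp

lemma sum_in_ideal_pow: "(\<And>i. i \<in> S \<Longrightarrow> f i \<in> ideal_pow I j) \<Longrightarrow> sum f S \<in> ideal_pow I j"
  by (induction S rule: infinite_finite_induct) (simp_all add: zero_in_ideal_pow ideal_pow_add)

lemma ideal_pow_Suc_subset: "ideal_pow I (Suc j) \<subseteq> ideal_pow I j"
proof (induction j)
  case (Suc j)
  show ?case
  proof
    fix x
    assume "x \<in> ideal_pow I (Suc (Suc j))"
    then obtain S :: "nat set" and f g where S: "finite S" "\<forall>i\<in>S. f i \<in> I \<and> g i \<in> ideal_pow I (Suc j)"
      and x: "x = (\<Sum>i\<in>S. f i * g i)"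
      by auto
    show "x \<in> ideal_pow I (Suc j)"
      unfolding x using S Suc.IH by (intro ideal_pow_SucI) blast+
  qed
qed simp

lemma ideal_pow_antimono: "i \<le> j \<Longrightarrow> ideal_pow I j \<subseteq> ideal_pow I i"
  by (rule lift_Suc_antimono_le[of "ideal_pow I", OF ideal_pow_Suc_subset])

lemma ideal_pow_1:
  assumes "is_ideal I"
  shows "ideal_pow I (Suc 0) = I"
proof
  have sum: "sum h S \<in> I" if "\<And>i. i \<in> S \<Longrightarrow> h i \<in> I" for h and S :: "nat set"
    using that assms by (induction S rule: infinite_finite_induct) (auto simp: is_ideal_def)
  show "ideal_pow I (Suc 0) \<subseteq> I"
  proof
    fix x
    assume "x \<in> ideal_pow I (Suc 0)"
    then obtain S :: "nat set" and f g where f: "\<forall>i\<in>S. f i \<in> I"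
      and x: "x = (\<Sum>i\<in>S. f i * g i)"
      by auto
    have "g i * f i \<in> I" if "i \<in> S" for i
      using assms f that unfolding is_ideal_def by blast
    then show "x \<in> I"
      unfolding x by (intro sum) (simp add: mult.commute)
  qed
  show "I \<subseteq> ideal_pow I (Suc 0)"
  proof
    fix x
    assume "x \<in> I"
    then have "(\<Sum>i\<in>{0::nat}. x * 1) \<in> ideal_pow I (Suc 0)"
      by (intro ideal_pow_SucI) auto
    then show "x \<in> ideal_pow I (Suc 0)"
      by simp
  qed
qed

definition entries_in_ideal_pow :: "'a::comm_ring_1 set \<Rightarrow> nat \<Rightarrow> 'a^'n^'m \<Rightarrow> bool" where
  "entries_in_ideal_pow I j X \<longleftrightarrow> (\<forall>i k. X $ i $ k \<in> ideal_pow I j)"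

lemma entries_in_ideal_pow_0: "entries_in_ideal_pow I j 0"
  by (simp add: entries_in_ideal_pow_def zero_in_ideal_pow)

lemma entries_in_ideal_pow_add:
  "entries_in_ideal_pow I j X \<Longrightarrow> entries_in_ideal_pow I j Y \<Longrightarrow> entries_in_ideal_pow I j (X + Y)"
  by (simp add: entries_in_ideal_pow_def ideal_pow_add)

lemma entries_in_ideal_pow_uminus: "entries_in_ideal_pow I j X \<Longrightarrow> entries_in_ideal_pow I j (- X)"
  using ideal_pow_mult_left[of _ I j "- 1"] by (simp add: entries_in_ideal_pow_def)

lemma entries_in_ideal_pow_antimono:
  "i \<le> j \<Longrightarrow> entries_in_ideal_pow I j X \<Longrightarrow> entries_in_ideal_pow I i X"
  using ideal_pow_antimono by (fastforce simp: entries_in_ideal_pow_def)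

lemma entries_in_ideal_pow_mult:
  "entries_in_ideal_pow I a X \<Longrightarrow> entries_in_ideal_pow I b Y \<Longrightarrow> entries_in_ideal_pow I (a + b) (X ** Y)"
  by (simp add: entries_in_ideal_pow_def matrix_matrix_mult_def sum_in_ideal_pow ideal_pow_mult)

lemma entries_in_ideal_pow_mult_left:
  "entries_in_ideal_pow I j Y \<Longrightarrow> entries_in_ideal_pow I j (X ** Y)"
  by (simp add: entries_in_ideal_pow_def matrix_matrix_mult_def sum_in_ideal_pow ideal_pow_mult_left)

lemma entries_in_ideal_pow_mult_right:
  "entries_in_ideal_pow I j X \<Longrightarrow> entries_in_ideal_pow I j (X ** Y)"
  by (simp add: entries_in_ideal_pow_def matrix_matrix_mult_def sum_in_ideal_pow
      ideal_pow_mult_left mult.commute[of _ "Y $ _ $ _"])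

lemma entries_in_ideal_pow_poly_mat_diff:
  assumes "entries_in_ideal_pow I j (X - Y)"
  shows "entries_in_ideal_pow I j (poly_mat p X - poly_mat p Y)"
proof (induction p)
  case (pCons a p)
  have "poly_mat (pCons a p) X - poly_mat (pCons a p) Y
      = X ** (poly_mat p X - poly_mat p Y) + (X - Y) ** poly_mat p Y"
    by (simp add: poly_mat_pCons matrix_diff_ldistrib matrix_diff_rdistrib)
  then show ?case
    using pCons.IH assms
    by (simp add: entries_in_ideal_pow_add entries_in_ideal_pow_mult_left entries_in_ideal_pow_mult_right)
qed (simp add: entries_in_ideal_pow_0)

lemma complete_wrt_entries_limit:
  assumes "complete_wrt I" and "\<And>j. entries_in_ideal_pow I j (X (Suc j) - X j)"
  obtains B where "\<And>j. entries_in_ideal_pow I j (B - X j)"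
proof -
  have "\<exists>y. \<forall>j. y - X j $ i $ k \<in> ideal_pow I j" for i k
    using assms unfolding complete_wrt_def entries_in_ideal_pow_def by simp
  then obtain Y where "\<And>i k j. Y i k - X j $ i $ k \<in> ideal_pow I j"
    by metis
  then show ?thesis
    by (intro that[of "\<chi> i k. Y i k"]) (simp add: entries_in_ideal_pow_def)
qed

lemma complete_wrt_entries_eq_0:
  assumes "complete_wrt I" and "\<And>j. entries_in_ideal_pow I j X"
  shows "X = 0"
  using assms unfolding complete_wrt_def entries_in_ideal_pow_def by (simp add: vec_eq_iff)

lemma complete_wrt_poly_mat_limit:
  assumes complete: "complete_wrt I"
    and B: "\<And>j. entries_in_ideal_pow I j (B - X j)"
    and root: "\<And>j. entries_in_ideal_pow I j (poly_mat F (X j) - A)"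
  shows "poly_mat F B = A"
proof -
  have "entries_in_ideal_pow I j (poly_mat F B - A)" for j
  proof -
    have "entries_in_ideal_pow I j ((poly_mat F B - poly_mat F (X j)) + (poly_mat F (X j) - A))"
      using entries_in_ideal_pow_poly_mat_diff[OF B] root by (rule entries_in_ideal_pow_add)
    then show ?thesis
      by simp
  qed
  then show ?thesis
    using complete_wrt_entries_eq_0[OF complete] by fastforce
qed

(* The library's pderiv is only defined over rings without zero divisors. *)
definition poly_deriv :: "'a::comm_ring_1 poly \<Rightarrow> 'a poly" where
  "poly_deriv p = Poly (map (\<lambda>i. of_nat (Suc i) * coeff p (Suc i)) [0..<degree p])"

lemma coeff_poly_deriv: "coeff (poly_deriv p) n = of_nat (Suc n) * coeff p (Suc n)"
  by (cases "n < degree p") (auto simp: poly_deriv_def nth_default_def coeff_eq_0)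

lemma poly_deriv_0 [simp]: "poly_deriv 0 = 0"
  by (rule poly_eqI) (simp add: coeff_poly_deriv)

lemma poly_deriv_pCons: "poly_deriv (pCons a p) = p + pCons 0 (poly_deriv p)"
  by (rule poly_eqI) (simp add: coeff_poly_deriv coeff_pCons algebra_simps split: nat.split)

lemma poly_deriv_eq_pderiv: "poly_deriv (p :: 'a::{comm_ring_1, semiring_no_zero_divisors} poly) = pderiv p"
  by (rule poly_eqI) (simp add: coeff_poly_deriv coeff_pderiv)

lemma pcompose_add_taylor:
  fixes p g h :: "'a::comm_ring_1 poly"
  shows "\<exists>Q. pcompose p (g + h) = pcompose p g + pcompose (poly_deriv p) g * h + h^2 * Q"
proof (induction p)
  case 0
  show ?case
    by (rule exI[of _ 0]) simp
next
  case (pCons a p)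
  then obtain Q where Q: "pcompose p (g + h) = pcompose p g + pcompose (poly_deriv p) g * h + h^2 * Q"
    by blast
  have "pcompose (pCons a p) (g + h) = pcompose (pCons a p) g + pcompose (poly_deriv (pCons a p)) g * h
      + h^2 * (pcompose (poly_deriv p) g + (g + h) * Q)"
    by (simp add: pcompose_pCons poly_deriv_pCons pcompose_add Q algebra_simps power2_eq_square)
  then show ?case
    by blast
qed

lemma newton_defect_identity:
  fixes X e D c Q :: "'a::comm_ring_1"
  shows "(e + X) + D * - (c * e) + (- (c * e))^2 * Q - X = (1 - D * c) * e + e * e * (c * c * Q)"
  by (simp add: algebra_simps power2_eq_square)

lemma newton_step:
  fixes A :: "'a::comm_ring_1^'n^'n"
  assumes defect: "entries_in_ideal_pow I (Suc j) (poly_mat F (poly_mat g A) - A)"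
    and inverse: "entries_in_ideal_pow I (Suc 0)
      (mat 1 - poly_mat (poly_deriv F) (poly_mat g A) ** poly_mat c A)"
  shows "entries_in_ideal_pow I (Suc (Suc j))
      (poly_mat F (poly_mat (g - c * (pcompose F g - [:0, 1:])) A) - A)"
proof -
  define e where "e = pcompose F g - [:0, 1:]"
  define E where "E = poly_mat F (poly_mat g A) - A"
  define U where "U = mat 1 - poly_mat (poly_deriv F) (poly_mat g A) ** poly_mat c A"
  obtain Q where Q: "pcompose F (g + - (c * e))
      = pcompose F g + pcompose (poly_deriv F) g * - (c * e) + (- (c * e))^2 * Q"
    using pcompose_add_taylor by blast
  have "pcompose F g = e + [:0, 1:]"
    by (simp add: e_def)
  with Q have "pcompose F (g - c * e)
      = (e + [:0, 1:]) + pcompose (poly_deriv F) g * - (c * e) + (- (c * e))^2 * Q"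
    by simp
  \<comment> \<open>the first factor lies in I and e in I^(j+1), so the new defect lies in I^(j+2)\<close>
  then have identity: "pcompose F (g - c * e) - [:0, 1:]
      = (1 - pcompose (poly_deriv F) g * c) * e + e * e * (c * c * Q)"
    by (simp only: newton_defect_identity)
  have eE: "poly_mat e A = E"
    by (simp add: e_def E_def poly_mat_diff poly_mat_pcompose poly_mat_X)
  from arg_cong[OF identity, of "\<lambda>p. poly_mat p A"]
  have expand: "poly_mat F (poly_mat (g - c * e) A) - A = U ** E + E ** E ** poly_mat (c * c * Q) A"
    unfolding U_def
    by (simp add: eE poly_mat_add poly_mat_diff poly_mat_mult poly_mat_1 poly_mat_pcompose poly_mat_X)
  have "entries_in_ideal_pow I (Suc (Suc j)) (U ** E)"
    using entries_in_ideal_pow_mult[OF inverse defect] by (simp add: U_def E_def)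
  moreover have "entries_in_ideal_pow I (Suc j + Suc j) (E ** E ** poly_mat (c * c * Q) A)"
    using entries_in_ideal_pow_mult[OF defect defect] unfolding E_def
    by (rule entries_in_ideal_pow_mult_right)
  then have "entries_in_ideal_pow I (Suc (Suc j)) (E ** E ** poly_mat (c * c * Q) A)"
    by (rule entries_in_ideal_pow_antimono[rotated]) simp
  ultimately show ?thesis
    unfolding e_def[symmetric] expand by (rule entries_in_ideal_pow_add)
qed

locale comm_ring_hom =
  fixes red :: "'a::comm_ring_1 \<Rightarrow> 'b::comm_ring_1"
  assumes hom_add [simp]: "red (x + y) = red x + red y"
    and hom_mult [simp]: "red (x * y) = red x * red y"
    and hom_one [simp]: "red 1 = 1"
begin

lemma hom_0 [simp]: "red 0 = 0"
  using hom_add[of 0 0] by simp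

lemma hom_uminus [simp]: "red (- x) = - red x"
proof -
  have "red x + red (- x) = 0"
    using hom_add[of x "- x"] by simp
  then show ?thesis
    by (rule minus_unique[symmetric])
qed

lemma hom_diff [simp]: "red (x - y) = red x - red y"
  using hom_add[of x "- y"] by simp

lemma hom_sum [simp]: "red (sum f S) = (\<Sum>i\<in>S. red (f i))"
  by (induction S rule: infinite_finite_induct) simp_all

lemma hom_of_nat [simp]: "red (of_nat n) = of_nat n"
  by (induction n) simp_all

lemma map_mat_add: "map_mat red (X + Y) = map_mat red X + map_mat red Y"
  by (simp add: map_mat_def vec_eq_iff)

lemma map_mat_diff: "map_mat red (X - Y) = map_mat red X - map_mat red Y"
  by (simp add: map_mat_def vec_eq_iff)

lemma map_mat_mult: "map_mat red (X ** Y) = map_mat red X ** map_mat red Y"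
  by (simp add: map_mat_def vec_eq_iff matrix_matrix_mult_def)

lemma map_mat_mat: "map_mat red (mat c) = mat (red c)"
  by (simp add: map_mat_def vec_eq_iff mat_def)

lemma map_mat_poly_mat: "map_mat red (poly_mat p M) = poly_mat (map_poly red p) (map_mat red M)"
proof (induction p)
  case 0
  show ?case
    by (simp add: map_mat_def vec_eq_iff)
next
  case (pCons a p)
  then show ?case
    by (simp add: map_poly_pCons poly_mat_pCons map_mat_add map_mat_mult map_mat_mat)
qed

lemma map_poly_poly_deriv: "map_poly red (poly_deriv p) = poly_deriv (map_poly red p)"
  by (rule poly_eqI) (simp add: coeff_map_poly coeff_poly_deriv)

lemma surj_map_poly:
  assumes "surj red"
  shows "surj (map_poly red)"
proof (rule surjI)
  fix p
  let ?lift = "\<lambda>y. if y = 0 then 0 else inv red y"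
  have "map_poly red (map_poly ?lift p) = map_poly (red \<circ> ?lift) p"
    by (simp add: map_poly_map_poly)
  also have "\<dots> = p"
    by (rule map_poly_idI) (simp add: surj_f_inv_f[OF assms])
  finally show "map_poly red (map_poly ?lift p) = p" .
qed

lemma entries_in_kernel_iff:
  "entries_in_ideal_pow {x. red x = 0} (Suc 0) X \<longleftrightarrow> map_mat red X = 0"
proof -
  have "ideal_pow {x. red x = 0} (Suc 0) = {x. red x = 0}"
    by (rule ideal_pow_1) (simp add: is_ideal_def)
  then show ?thesis
    unfolding entries_in_ideal_pow_def by (simp add: map_mat_def vec_eq_iff)
qed

lemma map_mat_eq_if_congruent:
  assumes "entries_in_ideal_pow {x. red x = 0} (Suc j) (X - Y)"
  shows "map_mat red X = map_mat red Y"
  using entries_in_ideal_pow_antimono[OF _ assms, of "Suc 0"] by (simp add: entries_in_kernel_iff map_mat_diff)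

lemma newton_approximations:
  fixes A :: "'a^'n^'n"
  assumes root: "poly_mat (map_poly red F) Bt = map_mat red A"
    and q: "map_mat red (poly_mat q A) = Bt"
    and c: "poly_mat (poly_deriv (map_poly red F)) Bt ** map_mat red (poly_mat c A) = mat 1"
  obtains X where "\<And>j. map_mat red (X j) = Bt"
    and "\<And>j. entries_in_ideal_pow {x. red x = 0} j (X (Suc j) - X j)"
    and "\<And>j. entries_in_ideal_pow {x. red x = 0} j (poly_mat F (X j) - A)"
proof -
  define g where "g = rec_nat q (\<lambda>_ p. p - c * (pcompose F p - [:0, 1:]))"
  have g_Suc: "g (Suc j) = g j - c * (pcompose F (g j) - [:0, 1:])" for j
    by (simp add: g_def)
  have step: "poly_mat (g (Suc j)) A - poly_mat (g j) A
      = - (poly_mat c A ** (poly_mat F (poly_mat (g j) A) - A))" for j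
    by (simp add: g_Suc poly_mat_diff poly_mat_mult poly_mat_pcompose poly_mat_X)
  have increment: "entries_in_ideal_pow {x. red x = 0} (Suc j) (poly_mat (g (Suc j)) A - poly_mat (g j) A)"
    if "entries_in_ideal_pow {x. red x = 0} (Suc j) (poly_mat F (poly_mat (g j) A) - A)" for j
    unfolding step using that by (intro entries_in_ideal_pow_uminus entries_in_ideal_pow_mult_left)
  have approx: "map_mat red (poly_mat (g j) A) = Bt \<and>
      entries_in_ideal_pow {x. red x = 0} (Suc j) (poly_mat F (poly_mat (g j) A) - A)" for j
  proof (induction j)
    case 0
    have "map_mat red (poly_mat F (poly_mat q A)) = map_mat red A"
      by (simp only: map_mat_poly_mat[of F] q root)
    then have "map_mat red (poly_mat F (poly_mat q A) - A) = 0"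
      by (simp add: map_mat_diff)
    then show ?case
      by (simp add: g_def q entries_in_kernel_iff)
  next
    case (Suc j)
    then have red_g: "map_mat red (poly_mat (g j) A) = Bt"
      and defect: "entries_in_ideal_pow {x. red x = 0} (Suc j) (poly_mat F (poly_mat (g j) A) - A)"
      by blast+
    have "map_mat red (poly_mat (g (Suc j)) A) = Bt"
      using map_mat_eq_if_congruent[OF increment[OF defect]] red_g by simp
    moreover have "map_mat red (mat 1 - poly_mat (poly_deriv F) (poly_mat (g j) A) ** poly_mat c A) = 0"
      by (simp add: map_mat_diff map_mat_mult map_mat_mat map_mat_poly_mat[of "poly_deriv F"]
          map_poly_poly_deriv red_g c)
    then have "entries_in_ideal_pow {x. red x = 0} (Suc (Suc j)) (poly_mat F (poly_mat (g (Suc j)) A) - A)"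
      unfolding g_Suc by (intro newton_step defect) (simp add: entries_in_kernel_iff)
    ultimately show ?case
      by blast
  qed
  show ?thesis
  proof (rule that[of "\<lambda>j. poly_mat (g j) A"])
    show "map_mat red (poly_mat (g j) A) = Bt" for j
      using approx by blast
    show "entries_in_ideal_pow {x. red x = 0} j (poly_mat (g (Suc j)) A - poly_mat (g j) A)" for j
      using increment approx entries_in_ideal_pow_antimono[OF le_SucI[OF order_refl]] by blast
    show "entries_in_ideal_pow {x. red x = 0} j (poly_mat F (poly_mat (g j) A) - A)" for j
      using approx entries_in_ideal_pow_antimono[OF le_SucI[OF order_refl]] by blast
  qed
qed

end

lemma cyclic_mat_centralizer_lift:
  fixes red :: "'a::comm_ring_1 \<Rightarrow> 'k::field"
  assumes hom: "comm_ring_hom red" and "surj red" and "cyclic_mat (map_mat red A)"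
    and "Y ** map_mat red A = map_mat red A ** Y"
  obtains p where "map_mat red (poly_mat p A) = Y"
proof -
  obtain pb where Y: "Y = poly_mat pb (map_mat red A)"
    using cyclic_mat_centralizer assms(3,4) by blast
  obtain p where "pb = map_poly red p"
    using surjD[OF comm_ring_hom.surj_map_poly[OF hom \<open>surj red\<close>]] by blast
  then have "map_mat red (poly_mat p A) = Y"
    by (simp add: Y comm_ring_hom.map_mat_poly_mat[OF hom])
  then show ?thesis
    by (rule that)
qed

theorem theorem2p4:
  fixes red :: "'a::comm_ring_1 \<Rightarrow> 'k::field"
    and A :: "'a^'n^'n" and F :: "'a poly" and d :: nat and Bt :: "'k^'n^'n"
  assumes red_add: "\<And>x y. red (x + y) = red x + red y"
    and red_mult: "\<And>x y. red (x * y) = red x * red y"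
    and red_one: "red 1 = 1"
    and red_surj: "surj red"
    and local: "local_ring_with {x. red x = 0}"
    and pir: "principal_ideal_ring TYPE('a)"
    and complete: "complete_wrt {x. red x = 0}"
    and char: "(2::'k) \<noteq> 0"
    and cyclic: "cyclic_mat (map_mat red A)"
    and monic: "lead_coeff F = 1"
    and deg: "degree F = d"
    and root: "poly_mat (map_poly red F) Bt = map_mat red A"
    and unit: "invertible (poly_mat (pderiv (map_poly red F)) Bt)"
  shows "\<exists>B::'a^'n^'n. map_mat red B = Bt \<and> poly_mat F B = A"
proof -
  have hom: "comm_ring_hom red"
    by unfold_locales (fact red_add red_mult red_one)+
  then interpret comm_ring_hom red .
  let ?A = "map_mat red A" and ?N = "poly_mat (poly_deriv (map_poly red F)) Bt"
  obtain D where ND: "?N ** D = mat 1" and DN: "D ** ?N = mat 1"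
    using unit unfolding invertible_def poly_deriv_eq_pderiv by blast
  have "Bt ** ?A = ?A ** Bt"
    unfolding root[symmetric] by (rule commute_poly_mat) (rule refl)
  then obtain q where q: "map_mat red (poly_mat q A) = Bt"
    using cyclic_mat_centralizer_lift[OF hom red_surj cyclic] by blast
  have "?N ** ?A = ?A ** ?N"
    unfolding root[symmetric] by (rule poly_mat_commute)
  with ND DN have "D ** ?A = ?A ** D"
    by (rule matrix_inverse_commute)
  then obtain c where "map_mat red (poly_mat c A) = D"
    using cyclic_mat_centralizer_lift[OF hom red_surj cyclic] by blast
  with ND have "?N ** map_mat red (poly_mat c A) = mat 1"
    by simp
  then obtain X where red_X: "\<And>j. map_mat red (X j) = Bt"
    and Cauchy: "\<And>j. entries_in_ideal_pow {x. red x = 0} j (X (Suc j) - X j)"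
    and defect: "\<And>j. entries_in_ideal_pow {x. red x = 0} j (poly_mat F (X j) - A)"
    using newton_approximations[OF root q] by blast
  obtain B where B: "\<And>j. entries_in_ideal_pow {x. red x = 0} j (B - X j)"
    using complete_wrt_entries_limit[OF complete Cauchy] by blast
  have "map_mat red B = Bt"
    using map_mat_eq_if_congruent[OF B[of "Suc 0"]] red_X by simp
  moreover have "poly_mat F B = A"
    using complete_wrt_poly_mat_limit[OF complete B defect] .
  ultimately show ?thesis
    by blast
qed

end
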